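(* Let $M$ be a monoid of binary relations on a finite set $Q$ and let $e,e'\in M$ be $\mathcal D$-equivalent idempotents. Then the permutation groups $G_e$ and $G_{e'}$ are equivalent.
   Context: Monoid of relations: set of relations on $Q$ containing the identity and closed under composition $mn=\{(p,q)\mid\exists r,(p,r)\in m,(r,q)\in n\}$. $\mathcal D$ is Green's relation $\mathcal L\mathcal R=\mathcal R\mathcal L$ in $M$. For an idempotent $e$, $H(e)$ is its $\mathcal H$-class (a group with identity $e$, inverses denoted $m^{-1}$), $\Gamma_e$ is the set of strongly connected components of the restriction of $e$ to its fixed points $\{q\mid (q,q)\in e\}$, and for $m\in H(e)$, $\gamma_e(m)=\{(\rho,\sigma)\in\Gamma_e^2\mid (r,s)\in m,(s,r)\in m^{-1}\text{ for some }r\in\rho,s\in\sigma\}$; $\gamma_e$ is an injective morphism into permutations of $\Gamma_e$, and $G_e=\gamma_e(H(e))$, a permutation group on $\Gamma_e$. Two permutation groups $G$ on $S$ and $G'$ on $S'$ are equivalent if there are a bijection $\theta:S\to S'$ and a group isomorphism $\alpha:G\to G'$ with $\theta(g(s))=\alpha(g)(\theta(s))$ for all $g\in G$, $s\in S$. *)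

theory Defs
  imports Main
begin

text \<open>Relations on Q are sets of pairs; the product m n of the paper is m O n.\<close>

definition rel_monoid :: "'q set \<Rightarrow> ('q \<times> 'q) set set \<Rightarrow> bool" where
  "rel_monoid Q M \<longleftrightarrow> (\<forall>m\<in>M. m \<subseteq> Q \<times> Q) \<and> Id_on Q \<in> M \<and>
     (\<forall>m\<in>M. \<forall>n\<in>M. m O n \<in> M)"

definition greenL :: "('q \<times> 'q) set set \<Rightarrow> ('q \<times> 'q) set \<Rightarrow> ('q \<times> 'q) set \<Rightarrow> bool" where
  "greenL M m n \<longleftrightarrow> m \<in> M \<and> n \<in> M \<and> (\<exists>x\<in>M. m = x O n) \<and> (\<exists>y\<in>M. n = y O m)"

definition greenR :: "('q \<times> 'q) set set \<Rightarrow> ('q \<times> 'q) set \<Rightarrow> ('q \<times> 'q) set \<Rightarrow> bool" where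
  "greenR M m n \<longleftrightarrow> m \<in> M \<and> n \<in> M \<and> (\<exists>x\<in>M. m = n O x) \<and> (\<exists>y\<in>M. n = m O y)"

definition greenD :: "('q \<times> 'q) set set \<Rightarrow> ('q \<times> 'q) set \<Rightarrow> ('q \<times> 'q) set \<Rightarrow> bool" where
  "greenD M m n \<longleftrightarrow> (\<exists>k. greenL M m k \<and> greenR M k n)"

definition Hclass :: "('q \<times> 'q) set set \<Rightarrow> ('q \<times> 'q) set \<Rightarrow> ('q \<times> 'q) set set" where
  "Hclass M e = {m. greenL M m e \<and> greenR M m e}"

definition Hinv :: "('q \<times> 'q) set set \<Rightarrow> ('q \<times> 'q) set \<Rightarrow> ('q \<times> 'q) set \<Rightarrow> ('q \<times> 'q) set" where
  "Hinv M e m = (THE m'. m' \<in> Hclass M e \<and> m O m' = e \<and> m' O m = e)"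

definition fixpts :: "'q set \<Rightarrow> ('q \<times> 'q) set \<Rightarrow> 'q set" where
  "fixpts Q e = {q \<in> Q. (q, q) \<in> e}"

definition Gamma :: "'q set \<Rightarrow> ('q \<times> 'q) set \<Rightarrow> 'q set set" where
  "Gamma Q e = (let F = fixpts Q e; r = e \<inter> (F \<times> F) in
     {{q \<in> F. (p, q) \<in> r\<^sup>* \<and> (q, p) \<in> r\<^sup>*} | p. p \<in> F})"

definition gamma :: "'q set \<Rightarrow> ('q \<times> 'q) set set \<Rightarrow> ('q \<times> 'q) set \<Rightarrow> ('q \<times> 'q) set
    \<Rightarrow> ('q set \<times> 'q set) set" where
  "gamma Q M e m = {(\<rho>, \<sigma>). \<rho> \<in> Gamma Q e \<and> \<sigma> \<in> Gamma Q e \<and>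
     (\<exists>r\<in>\<rho>. \<exists>s\<in>\<sigma>. (r, s) \<in> m \<and> (s, r) \<in> Hinv M e m)}"

definition Ggroup :: "'q set \<Rightarrow> ('q \<times> 'q) set set \<Rightarrow> ('q \<times> 'q) set \<Rightarrow> ('q set \<times> 'q set) set set" where
  "Ggroup Q M e = gamma Q M e ` Hclass M e"

definition rapp :: "('a \<times> 'a) set \<Rightarrow> 'a \<Rightarrow> 'a" where
  "rapp g s = (THE t. (s, t) \<in> g)"

definition perm_group_equiv :: "('a \<times> 'a) set set \<Rightarrow> 'a set \<Rightarrow> ('b \<times> 'b) set set \<Rightarrow> 'b set \<Rightarrow> bool" where
  "perm_group_equiv G S G' S' \<longleftrightarrow> (\<exists>\<theta> \<alpha>. bij_betw \<theta> S S' \<and> bij_betw \<alpha> G G' \<and>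
     (\<forall>g\<in>G. \<forall>h\<in>G. \<alpha> (g O h) = \<alpha> g O \<alpha> h) \<and>
     (\<forall>g\<in>G. \<forall>s\<in>S. \<theta> (rapp g s) = rapp (\<alpha> g) (\<theta> s)))"

end

theory Submission
  imports Defs
begin

text \<open>
  If \<open>e\<close> and \<open>e'\<close> are \<open>\<D>\<close>-equivalent idempotents, there are \<open>u, v \<in> M\<close> with
  \<open>u v = e\<close>, \<open>v u = e'\<close>, \<open>u e' = u\<close> and \<open>e' v = v\<close>. Conjugation \<open>h \<mapsto> v h u\<close> is then
  an isomorphism \<open>H(e) \<cong> H(e')\<close>, and linking a component \<open>\<rho>\<close> of \<open>e\<close> to the component
  \<open>\<sigma>\<close> of \<open>e'\<close> that contains some \<open>s\<close> with \<open>(r, s) \<in> u\<close>, \<open>(s, r) \<in> v\<close> for an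
  \<open>r \<in> \<rho>\<close> is a well-defined bijection \<open>\<Gamma>\<^sub>e \<rightarrow> \<Gamma>\<^sub>e\<^sub>'\<close>. Since composing such links
  composes the relations, this bijection carries \<open>\<gamma>\<^sub>e(h)\<close> to \<open>\<gamma>\<^sub>e\<^sub>'(v h u)\<close>, which
  is exactly the required equivalence of permutation groups.
\<close>

definition scc :: "('q \<times> 'q) set \<Rightarrow> 'q \<Rightarrow> 'q set" where
  "scc e p = {q. (p, q) \<in> e \<and> (q, p) \<in> e}"

lemma rtrancl_Restr_trans:
  assumes "(p, q) \<in> (Restr e A)\<^sup>*" "trans e"
  shows "p = q \<or> (p, q) \<in> e"
  using assms by (induction rule: rtrancl_induct) (blast dest: transD)+

lemma Gamma_eq_scc:
  assumes "e \<subseteq> Q \<times> Q" "trans e"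
  shows "Gamma Q e = {scc e p | p. (p, p) \<in> e}"
proof -
  let ?F = "fixpts Q e"
  have component: "{q \<in> ?F. (p, q) \<in> (e \<inter> ?F \<times> ?F)\<^sup>* \<and> (q, p) \<in> (e \<inter> ?F \<times> ?F)\<^sup>*} = scc e p"
    if "(p, p) \<in> e" for p
    using that assms by (auto simp: scc_def fixpts_def dest: transD rtrancl_Restr_trans)
  show ?thesis
    unfolding Gamma_def Let_def using component assms(1) by (auto simp: fixpts_def)
qed

lemma scc_in_Gamma:
  assumes "e \<subseteq> Q \<times> Q" "trans e" "(p, p) \<in> e"
  shows "scc e p \<in> Gamma Q e"
  using assms by (auto simp: Gamma_eq_scc)

lemma Gamma_memD:
  assumes "e \<subseteq> Q \<times> Q" "trans e" "\<rho> \<in> Gamma Q e" "r \<in> \<rho>"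
  shows "\<rho> = scc e r" "(r, r) \<in> e"
  using assms by (auto simp: Gamma_eq_scc scc_def dest: transD)

lemma scc_eq:
  assumes "trans e" "q \<in> scc e p"
  shows "scc e q = scc e p"
  using assms by (auto simp: scc_def dest: transD)

lemma Gamma_mem_nonempty:
  assumes "e \<subseteq> Q \<times> Q" "trans e" "\<rho> \<in> Gamma Q e"
  obtains r where "r \<in> \<rho>"
  using assms by (auto simp: Gamma_eq_scc scc_def)

definition comp_link :: "'q set \<Rightarrow> ('q \<times> 'q) set \<Rightarrow> ('q \<times> 'q) set \<Rightarrow> ('q \<times> 'q) set
    \<Rightarrow> ('q \<times> 'q) set \<Rightarrow> ('q set \<times> 'q set) set" where
  "comp_link Q e e' a b = {(\<rho>, \<sigma>). \<rho> \<in> Gamma Q e \<and> \<sigma> \<in> Gamma Q e' \<and>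
     (\<exists>r\<in>\<rho>. \<exists>s\<in>\<sigma>. (r, s) \<in> a \<and> (s, r) \<in> b)}"

lemma gamma_eq_comp_link: "gamma Q M e m = comp_link Q e e m (Hinv M e m)"
  by (simp add: gamma_def comp_link_def)

lemma comp_link_converse_iff:
  "(\<rho>, \<sigma>) \<in> comp_link Q e e' a b \<longleftrightarrow> (\<sigma>, \<rho>) \<in> comp_link Q e' e b a"
  by (auto simp: comp_link_def)

lemma comp_link_subset: "comp_link Q e e' a b \<subseteq> Gamma Q e \<times> Gamma Q e'"
  by (auto simp: comp_link_def)

lemma comp_link_total:
  assumes "e \<subseteq> Q \<times> Q" "trans e" "e' \<subseteq> Q \<times> Q" "trans e'"
    and "a O b = e" "b O a = e'" "\<rho> \<in> Gamma Q e"
  obtains \<sigma> where "(\<rho>, \<sigma>) \<in> comp_link Q e e' a b"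
proof -
  obtain r where r: "r \<in> \<rho>" using Gamma_mem_nonempty[OF assms(1,2,7)] .
  then have "(r, r) \<in> e" using Gamma_memD(2)[OF assms(1,2,7)] by blast
  then obtain s where s: "(r, s) \<in> a" "(s, r) \<in> b" using assms(5) by blast
  then have "(s, s) \<in> e'" using assms(6) by blast
  then have "scc e' s \<in> Gamma Q e'" "s \<in> scc e' s"
    using scc_in_Gamma[OF assms(3,4)] by (auto simp: scc_def)
  then have "(\<rho>, scc e' s) \<in> comp_link Q e e' a b"
    using assms(7) r s unfolding comp_link_def by blast
  then show thesis by (rule that)
qed

lemma comp_link_functional:
  assumes "e \<subseteq> Q \<times> Q" "trans e" "e' \<subseteq> Q \<times> Q" "trans e'"
    and "b O e = b" "b O a = e'"
    and "(\<rho>, \<sigma>\<^sub>1) \<in> comp_link Q e e' a b" "(\<rho>, \<sigma>\<^sub>2) \<in> comp_link Q e e' a b"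
  shows "\<sigma>\<^sub>1 = \<sigma>\<^sub>2"
proof -
  obtain r\<^sub>1 s\<^sub>1 where 1: "r\<^sub>1 \<in> \<rho>" "s\<^sub>1 \<in> \<sigma>\<^sub>1" "(r\<^sub>1, s\<^sub>1) \<in> a" "(s\<^sub>1, r\<^sub>1) \<in> b"
    "\<rho> \<in> Gamma Q e" "\<sigma>\<^sub>1 \<in> Gamma Q e'"
    using assms(7) by (auto simp: comp_link_def)
  obtain r\<^sub>2 s\<^sub>2 where 2: "r\<^sub>2 \<in> \<rho>" "s\<^sub>2 \<in> \<sigma>\<^sub>2" "(r\<^sub>2, s\<^sub>2) \<in> a" "(s\<^sub>2, r\<^sub>2) \<in> b"
    "\<sigma>\<^sub>2 \<in> Gamma Q e'"
    using assms(8) by (auto simp: comp_link_def)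
  have "r\<^sub>2 \<in> scc e r\<^sub>1"
    using Gamma_memD(1)[OF assms(1,2) 1(5,1)] 2(1) by simp
  then have "(r\<^sub>1, r\<^sub>2) \<in> e" "(r\<^sub>2, r\<^sub>1) \<in> e"
    by (simp_all add: scc_def)
  \<comment> \<open>the round trips \<open>s\<^sub>i \<rightarrow> r\<^sub>i \<rightarrow> r\<^sub>j \<rightarrow> s\<^sub>j\<close> lie in \<open>b O e O a = e'\<close>\<close>
  then have "(s\<^sub>1, s\<^sub>2) \<in> b O e O a" "(s\<^sub>2, s\<^sub>1) \<in> b O e O a"
    using 1 2 by blast+
  then have "s\<^sub>2 \<in> scc e' s\<^sub>1"
    using assms(5,6) by (simp add: O_assoc[symmetric] scc_def)
  then show ?thesis
    using Gamma_memD(1)[OF assms(3,4) 1(6,2)] Gamma_memD(1)[OF assms(3,4) 2(5,2)]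
      scc_eq[OF assms(4)] by simp
qed

lemma comp_link_relcomp:
  assumes "e' \<subseteq> Q \<times> Q" "trans e'" "a O e' = a" "e' O b = b"
    and "(\<rho>, \<sigma>) \<in> comp_link Q e e' a b" "(\<sigma>, \<tau>) \<in> comp_link Q e' e'' c d"
  shows "(\<rho>, \<tau>) \<in> comp_link Q e e'' (a O c) (d O b)"
proof -
  obtain r s where 1: "r \<in> \<rho>" "s \<in> \<sigma>" "(r, s) \<in> a" "(s, r) \<in> b" "\<sigma> \<in> Gamma Q e'"
    using assms(5) by (auto simp: comp_link_def)
  obtain s' t where 2: "s' \<in> \<sigma>" "t \<in> \<tau>" "(s', t) \<in> c" "(t, s') \<in> d"
    using assms(6) by (auto simp: comp_link_def)
  have "(s, s') \<in> e'" "(s', s) \<in> e'"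
    using Gamma_memD(1)[OF assms(1,2) 1(5,2)] 2(1) by (auto simp: scc_def)
  then have "(r, t) \<in> (a O e') O c" "(t, r) \<in> d O (e' O b)"
    using 1 2 by blast+
  then have "(r, t) \<in> a O c" "(t, r) \<in> d O b"
    using assms(3,4) by simp_all
  moreover have "\<rho> \<in> Gamma Q e" "\<tau> \<in> Gamma Q e''"
    using assms(5,6) comp_link_subset by blast+
  ultimately show ?thesis
    using 1(1) 2(2) unfolding comp_link_def by blast
qed

lemma Hclass_in_M: "h \<in> Hclass M e \<Longrightarrow> h \<in> M"
  by (simp add: Hclass_def greenL_def)

lemma Hclass_right_unit:
  assumes "h \<in> Hclass M e" "e O e = e"
  shows "h O e = h"
proof -
  obtain x where "h = x O e" using assms(1) by (auto simp: Hclass_def greenL_def)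
  then show ?thesis using assms(2) by (simp add: O_assoc)
qed

lemma Hclass_left_unit:
  assumes "h \<in> Hclass M e" "e O e = e"
  shows "e O h = h"
proof -
  obtain x where "h = e O x" using assms(1) by (auto simp: Hclass_def greenR_def)
  then show ?thesis using assms(2) by (simp add: O_assoc[symmetric])
qed

lemma HclassI:
  assumes "h \<in> M" "e \<in> M" "e O h = h" "h O e = h"
    and "x \<in> M" "x O h = e" "y \<in> M" "h O y = e"
  shows "h \<in> Hclass M e"
proof -
  have "greenL M h e"
    unfolding greenL_def using assms(1,2,5,6) assms(4)[symmetric] by blast
  moreover have "greenR M h e"
    unfolding greenR_def using assms(1,2,7,8) assms(3)[symmetric] by blast
  ultimately show ?thesis by (simp add: Hclass_def)
qed

lemma Hinv_eqI:
  assumes "g \<in> Hclass M e" "g' \<in> Hclass M e" "g O g' = e" "g' O g = e" "e O e = e"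
  shows "Hinv M e g = g'"
  unfolding Hinv_def
proof (rule the_equality)
  show "g' \<in> Hclass M e \<and> g O g' = e \<and> g' O g = e" using assms by simp
  fix g'' assume g'': "g'' \<in> Hclass M e \<and> g O g'' = e \<and> g'' O g = e"
  have "g'' = g'' O e" using Hclass_right_unit g'' assms(5) by metis
  also have "\<dots> = (g'' O g) O g'" using assms(3) by (simp add: O_assoc)
  also have "\<dots> = g'" using g'' Hclass_left_unit[OF assms(2,5)] by simp
  finally show "g'' = g'" .
qed

lemma Hclass_inverse_exists:
  assumes closed: "\<forall>m\<in>M. \<forall>n\<in>M. m O n \<in> M" and "e O e = e" "h \<in> Hclass M e"
  obtains h' where "h' \<in> Hclass M e" "h O h' = e" "h' O h = e"
proof -
  obtain y where y: "y \<in> M" "y O h = e"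
    using assms(3) by (auto simp: Hclass_def greenL_def)
  obtain y' where y': "y' \<in> M" "h O y' = e"
    using assms(3) by (auto simp: Hclass_def greenR_def)
  have eM: "e \<in> M" using assms(3) by (simp add: Hclass_def greenL_def)
  \<comment> \<open>a left and a right inverse of \<open>h\<close> agree after multiplying by \<open>e\<close>\<close>
  have y_e: "y O e = e O y'"
    using y(2) y'(2) by (metis O_assoc)
  have "h O (y O e) = e"
    using y_e y'(2) Hclass_right_unit[OF assms(3,2)] by (metis O_assoc)
  moreover have "(y O e) O h = e"
    using y(2) Hclass_left_unit[OF assms(3,2)] by (metis O_assoc)
  moreover have "y O e \<in> Hclass M e"
  proof (rule HclassI)
    show "y O e \<in> M" using closed y(1) eM by blast
    show "e O (y O e) = y O e" using y_e assms(2) by (metis O_assoc)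
    show "(y O e) O e = y O e" using assms(2) by (simp add: O_assoc)
  qed (use eM Hclass_in_M[OF assms(3)] calculation in auto)
  ultimately show thesis using that by blast
qed

lemma Hinv:
  assumes "\<forall>m\<in>M. \<forall>n\<in>M. m O n \<in> M" "e O e = e" "h \<in> Hclass M e"
  shows "Hinv M e h \<in> Hclass M e" "h O Hinv M e h = e" "Hinv M e h O h = e"
proof -
  obtain h' where "h' \<in> Hclass M e" "h O h' = e" "h' O h = e"
    using Hclass_inverse_exists[OF assms] .
  moreover have "Hinv M e h = h'" using Hinv_eqI[OF assms(3) calculation assms(2)] .
  ultimately show "Hinv M e h \<in> Hclass M e" "h O Hinv M e h = e" "Hinv M e h O h = e"
    by simp_all
qed

definition graph_on :: "'a set \<Rightarrow> ('a \<times> 'a) set \<Rightarrow> bool" where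
  "graph_on S g \<longleftrightarrow> g \<subseteq> S \<times> S \<and> (\<forall>s\<in>S. \<exists>!t. (s, t) \<in> g)"

lemma rapp_eqI: "graph_on S g \<Longrightarrow> (s, t) \<in> g \<Longrightarrow> rapp g s = t"
  unfolding graph_on_def rapp_def by (rule the_equality) blast+

lemma graph_on_relabel:
  assumes "bij_betw \<theta> S S'" "graph_on S g"
  shows "graph_on S' (map_prod \<theta> \<theta> ` g)"
  unfolding graph_on_def
proof (intro conjI ballI)
  have inj: "inj_on \<theta> S" and S': "S' = \<theta> ` S" using assms(1) by (auto simp: bij_betw_def)
  have sub: "g \<subseteq> S \<times> S" and unique: "\<forall>s\<in>S. \<exists>!t. (s, t) \<in> g"
    using assms(2) by (auto simp: graph_on_def)
  show "map_prod \<theta> \<theta> ` g \<subseteq> S' \<times> S'" using sub S' by auto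
  fix s' assume "s' \<in> S'"
  then obtain s t where s: "s \<in> S" "s' = \<theta> s" and t: "(s, t) \<in> g"
    using S' unique by blast
  have t_unique: "y = t" if "(s, y) \<in> g" for y
    using unique s(1) t that by blast
  show "\<exists>!t'. (s', t') \<in> map_prod \<theta> \<theta> ` g"
  proof (rule ex1I)
    show "(s', \<theta> t) \<in> map_prod \<theta> \<theta> ` g" using s(2) t by force
    fix t' assume "(s', t') \<in> map_prod \<theta> \<theta> ` g"
    then obtain x y where xy: "(x, y) \<in> g" "\<theta> x = \<theta> s" "t' = \<theta> y"
      using s(2) by force
    have "x \<in> S" using sub xy(1) by blast
    then have "x = s" using inj_onD[OF inj xy(2) _ s(1)] by simp
    then show "t' = \<theta> t" using xy t_unique by simp
  qed
qed

lemma graph_on_subset_eq: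
  assumes "graph_on S f" "graph_on S g" "f \<subseteq> g"
  shows "f = g"
  using assms unfolding graph_on_def by blast

lemma map_prod_image_relcomp:
  assumes "inj_on f A" "g \<subseteq> A \<times> A" "h \<subseteq> A \<times> A"
  shows "map_prod f f ` (g O h) = map_prod f f ` g O map_prod f f ` h"
proof (intro set_eqI iffI)
  fix p assume "p \<in> map_prod f f ` (g O h)"
  then show "p \<in> map_prod f f ` g O map_prod f f ` h" by force
next
  fix p assume "p \<in> map_prod f f ` g O map_prod f f ` h"
  then obtain a b b' c where 1: "(a, b) \<in> g" "(b', c) \<in> h" "f b = f b'" "p = (f a, f c)"
    by force
  moreover have "b \<in> A" "b' \<in> A" using 1(1,2) assms(2,3) by blast+
  ultimately have "b = b'" using inj_onD[OF assms(1)] by blast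
  then show "p \<in> map_prod f f ` (g O h)" using 1 by force
qed

lemma perm_group_equiv_relabel:
  assumes \<theta>: "bij_betw \<theta> S S'" and G: "\<forall>g\<in>G. graph_on S g"
    and G': "(\<lambda>g. map_prod \<theta> \<theta> ` g) ` G = G'"
  shows "perm_group_equiv G S G' S'"
  unfolding perm_group_equiv_def
proof (intro exI conjI ballI)
  let ?\<alpha> = "\<lambda>g. map_prod \<theta> \<theta> ` g"
  have inj\<theta>: "inj_on \<theta> S" using \<theta> by (simp add: bij_betw_def)
  have sub: "g \<subseteq> S \<times> S" if "g \<in> G" for g using G that by (simp add: graph_on_def)
  show "bij_betw \<theta> S S'" by (rule \<theta>)
  have "inj_on ?\<alpha> G"
  proof (rule inj_onI)
    fix g h assume "g \<in> G" "h \<in> G" "?\<alpha> g = ?\<alpha> h"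
    then show "g = h"
      using inj_on_image_eq_iff[OF map_prod_inj_on[OF inj\<theta> inj\<theta>]] sub by metis
  qed
  then show "bij_betw ?\<alpha> G G'" using G' by (simp add: bij_betw_def)
  fix g assume g: "g \<in> G"
  show "?\<alpha> (g O h) = ?\<alpha> g O ?\<alpha> h" if "h \<in> G" for h
    using map_prod_image_relcomp[OF inj\<theta> sub[OF g] sub[OF that]] .
  fix s assume s: "s \<in> S"
  have "\<exists>!t. (s, t) \<in> g" using G g s by (simp add: graph_on_def)
  then obtain t where t: "(s, t) \<in> g" by blast
  have "rapp (?\<alpha> g) (\<theta> s) = \<theta> t"
    using rapp_eqI[OF graph_on_relabel[OF \<theta> G[rule_format, OF g]]] t by force
  then show "\<theta> (rapp g s) = rapp (?\<alpha> g) (\<theta> s)"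
    using rapp_eqI[OF G[rule_format, OF g] t] by simp
qed

lemma trans_if_idempotent: "e O e = e \<Longrightarrow> trans e"
  by (rule transI) blast

lemma gamma_graph_on:
  assumes "rel_monoid Q M" "e O e = e" "h \<in> Hclass M e"
  shows "graph_on (Gamma Q e) (gamma Q M e h)"
proof -
  have closed: "\<forall>m\<in>M. \<forall>n\<in>M. m O n \<in> M" and "\<forall>m\<in>M. m \<subseteq> Q \<times> Q"
    using assms(1) by (auto simp: rel_monoid_def)
  moreover have "e \<in> M" using assms(3) by (simp add: Hclass_def greenL_def)
  ultimately have e: "e \<subseteq> Q \<times> Q" "trans e"
    using trans_if_idempotent[OF assms(2)] by blast+
  note inv = Hinv[OF closed assms(2,3)]
  have inv_e: "Hinv M e h O e = Hinv M e h"
    using Hclass_right_unit[OF inv(1) assms(2)] .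
  show ?thesis
    unfolding graph_on_def gamma_eq_comp_link
  proof (intro conjI ballI)
    show "comp_link Q e e h (Hinv M e h) \<subseteq> Gamma Q e \<times> Gamma Q e"
      by (rule comp_link_subset)
    fix \<rho> assume "\<rho> \<in> Gamma Q e"
    then obtain \<sigma> where "(\<rho>, \<sigma>) \<in> comp_link Q e e h (Hinv M e h)"
      using comp_link_total[OF e e inv(2,3)] by blast
    then show "\<exists>!\<sigma>. (\<rho>, \<sigma>) \<in> comp_link Q e e h (Hinv M e h)"
      using comp_link_functional[OF e e inv_e inv(3)] by blast
  qed
qed

lemma greenD_idempotents_conjugate:
  assumes closed: "\<forall>m\<in>M. \<forall>n\<in>M. m O n \<in> M"
    and "e O e = e" "e' O e' = e'" "greenD M e e'"
  obtains u v where "u \<in> M" "v \<in> M" "u O v = e" "v O u = e'" "u O e' = u" "e' O v = v"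
proof -
  obtain k where L: "greenL M e k" and R: "greenR M k e'"
    using assms(4) by (auto simp: greenD_def)
  have "\<exists>x\<in>M. e = x O k" "\<exists>y\<in>M. k = y O e" "e \<in> M" "k \<in> M"
    using L by (simp_all add: greenL_def)
  then obtain x y where x: "x O k = e" and y: "y O e = k" by metis
  have "\<exists>z\<in>M. k = e' O z" "\<exists>w\<in>M. e' = k O w"
    using R by (simp_all add: greenR_def)
  then obtain z w where z: "e' O z = k" and w: "w \<in> M" "k O w = e'" by metis
  have k_e: "k O e = k" using y assms(2) by (metis O_assoc)
  have e'_k: "e' O k = k" using z assms(3) by (metis O_assoc)
  have e_w_k: "e O w O k = e" using x w(2) e'_k by (metis O_assoc)
  show thesis
  proof (rule that[of "e O w" k])
    show "e O w \<in> M" using closed \<open>e \<in> M\<close> w(1) by blast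
    show "(e O w) O k = e" using e_w_k by (simp add: O_assoc)
    show "k O (e O w) = e'" using k_e w(2) by (simp add: O_assoc[symmetric])
    show "(e O w) O e' = e O w" using e_w_k w(2) by (metis O_assoc)
  qed (use \<open>k \<in> M\<close> e'_k in simp_all)
qed

locale conjugate_idempotents =
  fixes Q :: "'q set" and M :: "('q \<times> 'q) set set" and e e' u v :: "('q \<times> 'q) set"
  assumes rel_monoid: "rel_monoid Q M" and u_in_M: "u \<in> M" and v_in_M: "v \<in> M"
    and uv: "u O v = e" and vu: "v O u = e'" and u_e': "u O e' = u" and e'_v: "e' O v = v"
begin

lemma swap: "conjugate_idempotents Q M e' e v u"
  using rel_monoid u_in_M v_in_M uv vu u_e' e'_v
  by unfold_locales (metis O_assoc)+

lemma closed: "\<forall>m\<in>M. \<forall>n\<in>M. m O n \<in> M"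
  using rel_monoid by (simp add: rel_monoid_def)

lemma e_u: "e O u = u"
  using uv vu u_e' by (metis O_assoc)

lemma v_e: "v O e = v"
  using uv vu e'_v by (metis O_assoc)

lemma idempotent: "e O e = e" "e' O e' = e'"
  using uv vu u_e' e'_v by (metis O_assoc)+

lemma in_M: "e \<in> M" "e' \<in> M"
  using closed u_in_M v_in_M uv vu by blast+

lemma subset_Q: "e \<subseteq> Q \<times> Q" "e' \<subseteq> Q \<times> Q"
  using rel_monoid in_M by (auto simp: rel_monoid_def)

lemmas subset_trans = subset_Q(1) trans_if_idempotent[OF idempotent(1)]
  subset_Q(2) trans_if_idempotent[OF idempotent(2)]

definition relabel :: "'q set \<Rightarrow> 'q set" where
  "relabel \<rho> = (THE \<sigma>. (\<rho>, \<sigma>) \<in> comp_link Q e e' u v)"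

lemma relabel_eqI: "(\<rho>, \<sigma>) \<in> comp_link Q e e' u v \<Longrightarrow> relabel \<rho> = \<sigma>"
  unfolding relabel_def
  by (rule the_equality) (use comp_link_functional[OF subset_trans v_e vu] in blast)+

lemma relabel_link: "\<rho> \<in> Gamma Q e \<Longrightarrow> (\<rho>, relabel \<rho>) \<in> comp_link Q e e' u v"
  using comp_link_total[OF subset_trans uv vu] relabel_eqI by metis

lemma bij_relabel: "bij_betw relabel (Gamma Q e) (Gamma Q e')"
proof -
  interpret swap: conjugate_idempotents Q M e' e v u by (rule swap)
  show ?thesis
  proof (rule bij_betw_byWitness[where f' = swap.relabel])
    show "\<forall>\<rho>\<in>Gamma Q e. swap.relabel (relabel \<rho>) = \<rho>"
      using relabel_link swap.relabel_eqI comp_link_converse_iff by blast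
    show "\<forall>\<sigma>\<in>Gamma Q e'. relabel (swap.relabel \<sigma>) = \<sigma>"
      using swap.relabel_link relabel_eqI comp_link_converse_iff by blast
    show "relabel ` Gamma Q e \<subseteq> Gamma Q e'"
      using relabel_link comp_link_subset by blast
    show "swap.relabel ` Gamma Q e' \<subseteq> Gamma Q e"
      using swap.relabel_link comp_link_subset by blast
  qed
qed

definition conj :: "('q \<times> 'q) set \<Rightarrow> ('q \<times> 'q) set" where
  "conj h = v O h O u"

lemma conj_relcomp: "h O e = h \<Longrightarrow> conj h O conj g = conj (h O g)"
  unfolding conj_def using uv by (metis O_assoc)

lemma conj_idempotent: "conj e = e'"
  unfolding conj_def using v_e vu by (metis O_assoc)

lemma conj_in_Hclass:
  assumes "h \<in> Hclass M e"
  shows "conj h \<in> Hclass M e'"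
proof -
  note inv = Hinv[OF closed idempotent(1) assms]
  have h_e: "h O e = h" and inv_e: "Hinv M e h O e = Hinv M e h"
    using Hclass_right_unit inv(1) assms idempotent(1) by blast+
  have M: "conj h \<in> M" "conj (Hinv M e h) \<in> M"
    unfolding conj_def using closed u_in_M v_in_M Hclass_in_M assms inv(1) by blast+
  have units: "e' O conj h = conj h" "conj h O e' = conj h"
    unfolding conj_def using e'_v u_e' by (metis O_assoc)+
  have "conj (Hinv M e h) O conj h = e'" "conj h O conj (Hinv M e h) = e'"
    using conj_relcomp inv h_e inv_e conj_idempotent by simp_all
  then show ?thesis
    using HclassI[OF M(1) in_M(2) units M(2) _ M(2)] by blast
qed

lemma Hinv_conj:
  assumes "h \<in> Hclass M e"
  shows "Hinv M e' (conj h) = conj (Hinv M e h)"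
proof (rule Hinv_eqI)
  note inv = Hinv[OF closed idempotent(1) assms]
  show "conj h \<in> Hclass M e'" "conj (Hinv M e h) \<in> Hclass M e'"
    using conj_in_Hclass assms inv(1) by blast+
  show "conj h O conj (Hinv M e h) = e'" "conj (Hinv M e h) O conj h = e'"
    using conj_relcomp inv Hclass_right_unit assms idempotent(1) conj_idempotent by metis+
qed (rule idempotent(2))

lemma conj_image_Hclass: "conj ` Hclass M e = Hclass M e'"
proof -
  interpret swap: conjugate_idempotents Q M e' e v u by (rule swap)
  have "g = conj (swap.conj g)" if "g \<in> Hclass M e'" for g
    using Hclass_left_unit[OF that idempotent(2)] Hclass_right_unit[OF that idempotent(2)]
    unfolding conj_def swap.conj_def by (metis O_assoc vu)
  then show ?thesis
    using conj_in_Hclass swap.conj_in_Hclass by blast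
qed

lemma relabel_gamma:
  assumes "h \<in> Hclass M e"
  shows "map_prod relabel relabel ` gamma Q M e h = gamma Q M e' (conj h)"
proof (rule graph_on_subset_eq)
  note inv = Hinv[OF closed idempotent(1) assms]
  show "graph_on (Gamma Q e') (map_prod relabel relabel ` gamma Q M e h)"
    using graph_on_relabel[OF bij_relabel gamma_graph_on[OF rel_monoid idempotent(1) assms]] .
  show "graph_on (Gamma Q e') (gamma Q M e' (conj h))"
    using gamma_graph_on[OF rel_monoid idempotent(2) conj_in_Hclass[OF assms]] .
  have "(relabel \<rho>, relabel \<sigma>) \<in> gamma Q M e' (conj h)" if "(\<rho>, \<sigma>) \<in> gamma Q M e h" for \<rho> \<sigma>
  proof -
    have \<rho>\<sigma>: "(\<rho>, \<sigma>) \<in> comp_link Q e e h (Hinv M e h)"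
      using that by (simp add: gamma_eq_comp_link)
    then have "\<rho> \<in> Gamma Q e" "\<sigma> \<in> Gamma Q e"
      using comp_link_subset by blast+
    then have to_\<rho>: "(relabel \<rho>, \<rho>) \<in> comp_link Q e' e v u"
      and from_\<sigma>: "(\<sigma>, relabel \<sigma>) \<in> comp_link Q e e' u v"
      using relabel_link comp_link_converse_iff by blast+
    have "(v O h) O e = v O h"
      using Hclass_right_unit[OF assms idempotent(1)] by (simp add: O_assoc)
    moreover have "e O (Hinv M e h O u) = Hinv M e h O u"
      using Hclass_left_unit[OF inv(1) idempotent(1)] by (simp add: O_assoc[symmetric])
    moreover have "(relabel \<rho>, \<sigma>) \<in> comp_link Q e' e (v O h) (Hinv M e h O u)"
      using comp_link_relcomp[OF subset_trans(1,2) v_e e_u to_\<rho> \<rho>\<sigma>] .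
    ultimately have "(relabel \<rho>, relabel \<sigma>) \<in> comp_link Q e' e' ((v O h) O u) (v O (Hinv M e h O u))"
      using comp_link_relcomp[OF subset_trans(1,2) _ _ _ from_\<sigma>] by blast
    then show ?thesis
      using Hinv_conj[OF assms] by (simp add: gamma_eq_comp_link conj_def O_assoc)
  qed
  then show "map_prod relabel relabel ` gamma Q M e h \<subseteq> gamma Q M e' (conj h)"
    by auto
qed

lemma Ggroup_equiv: "perm_group_equiv (Ggroup Q M e) (Gamma Q e) (Ggroup Q M e') (Gamma Q e')"
proof (rule perm_group_equiv_relabel[OF bij_relabel])
  show "\<forall>g\<in>Ggroup Q M e. graph_on (Gamma Q e) g"
    unfolding Ggroup_def using gamma_graph_on[OF rel_monoid idempotent(1)] by blast
  have "(\<lambda>g. map_prod relabel relabel ` g) ` Ggroup Q M e = gamma Q M e' ` conj ` Hclass M e"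
    unfolding Ggroup_def image_comp using relabel_gamma by (auto intro!: image_cong)
  then show "(\<lambda>g. map_prod relabel relabel ` g) ` Ggroup Q M e = Ggroup Q M e'"
    by (simp add: conj_image_Hclass Ggroup_def)
qed

end

theorem mainTheorem9:
  fixes Q :: "'q set" and M :: "('q \<times> 'q) set set" and e e' :: "('q \<times> 'q) set"
  assumes "finite Q" and "rel_monoid Q M"
    and "e \<in> M" and "e' \<in> M" and "e O e = e" and "e' O e' = e'"
    and "greenD M e e'"
  shows "perm_group_equiv (Ggroup Q M e) (Gamma Q e) (Ggroup Q M e') (Gamma Q e')"
proof -
  have "\<forall>m\<in>M. \<forall>n\<in>M. m O n \<in> M" using assms(2) by (simp add: rel_monoid_def)
  then obtain u v where "u \<in> M" "v \<in> M" "u O v = e" "v O u = e'" "u O e' = u" "e' O v = v"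
    using greenD_idempotents_conjugate assms(5-7) by blast
  then interpret conjugate_idempotents Q M e e' u v
    using assms(2) by unfold_locales
  show ?thesis by (rule Ggroup_equiv)
qed

end
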